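(* Let $1\le i<s\le t$ and let $\mathcal H$ be an $s$-graph on $n$ vertices with $\Delta_i(\mathcal H)\le\Delta$. (a) If $\Delta$ is a nonnegative integer with $(s-i)$-cascade representation $\Delta=\sum_{k=0}^{\ell-1}\binom{n_{s-i-k}}{s-i-k}$, then \[k^t(\mathcal H)\le\binom{n}{i}\frac{1}{\binom{t}{i}}\sum_{k=0}^{\ell-1}\binom{n_{s-i-k}}{t-i-k}.\] (b) If $\Delta=\binom{x-i}{s-i}$ for some real $x\ge s$, then $k^t(\mathcal H)=0$ when $s\le x<t$, and when $x\ge t$, \[k^t(\mathcal H)\le\binom{n}{i}\frac{\binom{x-i}{t-i}}{\binom{t}{i}}=\binom{n}{i}\frac{\binom{x}{t}}{\binom{x}{i}}.\]
   Context: An $s$-graph on vertex set $V$ is a family of $s$-subsets of $V$. For $|I|=i$, $d_{\mathcal H}(I)$ is the number of edges containing $I$ and $\Delta_i(\mathcal H)=\max_{|I|=i}d_{\mathcal H}(I)$. For $t\ge s$, a $t$-clique is a $t$-set all of whose $s$-subsets are edges; $k^t(\mathcal H)$ is the number of $t$-cliques. A strict $q$-cascade is an integer sequence $n_q>n_{q-1}>\dots>n_{q-\ell+1}$ with $0\le\ell\le q$ and $n_{q-k}\ge q-k$ for all $k$; every integer $m\ge0$ can be written uniquely as $m=\sum_{k=0}^{\ell-1}\binom{n_{q-k}}{q-k}$ with a strict $q$-cascade (the $q$-cascade representation; $\ell=0$ for $m=0$). For real $x$, $\binom{x}{k}=x(x-1)\cdots(x-k+1)/k!$. *)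

theory Defs
  imports Complex_Main
begin

definition is_sgraph :: "'a set \<Rightarrow> nat \<Rightarrow> 'a set set \<Rightarrow> bool" where
  "is_sgraph V s H \<longleftrightarrow> finite V \<and> (\<forall>e\<in>H. e \<subseteq> V \<and> card e = s)"

definition deg :: "'a set set \<Rightarrow> 'a set \<Rightarrow> nat" where
  "deg H I = card {e \<in> H. I \<subseteq> e}"

definition max_deg :: "'a set \<Rightarrow> 'a set set \<Rightarrow> nat \<Rightarrow> nat" where
  "max_deg V H i = Max (insert 0 {deg H I | I. I \<subseteq> V \<and> card I = i})"

definition cliques :: "'a set \<Rightarrow> nat \<Rightarrow> 'a set set \<Rightarrow> nat \<Rightarrow> 'a set set" where
  "cliques V s H t = {T. T \<subseteq> V \<and> card T = t \<and> (\<forall>S. S \<subseteq> T \<and> card S = s \<longrightarrow> S \<in> H)}"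

definition num_cliques :: "'a set \<Rightarrow> nat \<Rightarrow> 'a set set \<Rightarrow> nat \<Rightarrow> nat" where
  "num_cliques V s H t = card (cliques V s H t)"

text \<open>A strict q-cascade, as the list [n_q, n_{q-1}, ..., n_{q-l+1}]:
  entry k is n_{q-k}.\<close>
definition strict_cascade :: "nat \<Rightarrow> nat list \<Rightarrow> bool" where
  "strict_cascade q ns \<longleftrightarrow> length ns \<le> q \<and> sorted_wrt (>) ns \<and>
     (\<forall>k < length ns. ns ! k \<ge> q - k)"

definition cascade_value :: "nat \<Rightarrow> nat list \<Rightarrow> nat" where
  "cascade_value q ns = (\<Sum>k < length ns. (ns ! k) choose (q - k))"

end

theory Submission
  imports Defs
begin

text \<open>For \<open>i = 0\<close> this is Kruskal--Katona for cliques: the shadow of the \<open>(r + 1)\<close>-cliques lies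
  among the \<open>r\<close>-cliques, so a bound on the number of edges propagates to every clique size,
  in the exact cascade form (a) or in Lov\'asz's real form (b).  Both forms are proved by induction
  on the ground set, after shifting the family towards a vertex \<open>z\<close> so that it splits into the
  sets avoiding \<open>z\<close> and the link of \<open>z\<close>.  For general \<open>i\<close>, the \<open>t\<close>-cliques through an
  \<open>i\<close>-set \<open>I\<close> give \<open>(t - i)\<close>-cliques of the link of \<open>I\<close>, an \<open>(s - i)\<close>-graph with at most
  \<open>\<Delta>\<close> edges, and double counting the pairs \<open>(I, T)\<close> yields the factor
  \<open>(n choose i) / (t choose i)\<close>.  If \<open>x < t\<close>, a single \<open>t\<close>-clique already gives an \<open>i\<close>-set of
  degree \<open>(t - i) choose (s - i) > \<Delta>\<close>.\<close>

section \<open>Cascades\<close>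

fun cascade_sum :: "nat \<Rightarrow> nat list \<Rightarrow> nat" where
  "cascade_sum k [] = 0"
| "cascade_sum k (x # xs) = (x choose k) + cascade_sum (k - 1) xs"

fun is_cascade :: "nat \<Rightarrow> nat list \<Rightarrow> bool" where
  "is_cascade k [] = True"
| "is_cascade k (x # xs) \<longleftrightarrow> 0 < k \<and> k \<le> x \<and> (\<forall>y\<in>set xs. y < x) \<and> is_cascade (k - 1) xs"

abbreviation decr :: "nat list \<Rightarrow> nat list" where
  "decr a \<equiv> map (\<lambda>x. x - 1) a"

lemma cascade_sum_eq_sum: "cascade_sum k a = (\<Sum>j<length a. a ! j choose (k - j))"
proof (induction a arbitrary: k)
  case (Cons x xs)
  then show ?case
    unfolding length_Cons sum.lessThan_Suc_shift by simp
qed simp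

lemma cascade_value_eq_cascade_sum: "cascade_value q ns = cascade_sum q ns"
  unfolding cascade_value_def cascade_sum_eq_sum ..

lemma strict_cascade_imp_is_cascade: "strict_cascade q ns \<Longrightarrow> is_cascade q ns"
proof (induction ns arbitrary: q)
  case (Cons x xs)
  have len: "length (x # xs) \<le> q" and sorted: "sorted_wrt (>) (x # xs)"
    and ge: "\<forall>k < length (x # xs). (x # xs) ! k \<ge> q - k"
    using Cons.prems unfolding strict_cascade_def by auto
  have "strict_cascade (q - 1) xs"
    unfolding strict_cascade_def
  proof (intro conjI allI impI)
    fix k assume "k < length xs"
    then show "xs ! k \<ge> q - 1 - k" using ge[rule_format, of "Suc k"] by simp
  qed (use len sorted in auto)
  moreover have "q \<le> x" using ge[rule_format, of 0] by simp
  ultimately show ?case using Cons.IH len sorted by simp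
qed simp

lemma is_cascade_length_le: "is_cascade k a \<Longrightarrow> length a \<le> k"
  by (induction a arbitrary: k) fastforce+

lemma is_cascade_sorted: "is_cascade k a \<Longrightarrow> sorted_wrt (>) a"
  by (induction a arbitrary: k) auto

lemma is_cascade_pos: "is_cascade k a \<Longrightarrow> y \<in> set a \<Longrightarrow> 1 \<le> y"
  by (induction a arbitrary: k) auto

lemma cascade_sum_Cons_pos: "is_cascade q (x # xs) \<Longrightarrow> 1 \<le> cascade_sum q (x # xs)"
  by (simp add: Suc_leI)

lemma binomial_pred_self: "1 \<le> k \<Longrightarrow> k choose (k - 1) = k"
  using binomial_symmetric[of "k - 1" k] by simp

lemma cascade_sum_take_le: "cascade_sum k (take n a) \<le> cascade_sum k a"
  by (induction a arbitrary: k n) (auto simp: take_Cons')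

lemma cascade_sum_le_length:
  "sorted_wrt (>) a \<Longrightarrow> \<forall>y\<in>set a. y \<le> m \<Longrightarrow> cascade_sum m a \<le> length a"
proof (induction a arbitrary: m)
  case (Cons y ys)
  have "y choose m \<le> 1"
    using Cons.prems by (cases "y = m") (auto simp: binomial_eq_0)
  moreover have "cascade_sum (m - 1) ys \<le> length ys"
    using Cons.IH[of "m - 1"] Cons.prems by fastforce
  ultimately show ?case by simp
qed simp

lemma cascade_sum_pascal:
  "is_cascade k a \<Longrightarrow> cascade_sum k a = cascade_sum k (decr a) + cascade_sum (k - 1) (decr a)"
proof (induction a arbitrary: k)
  case (Cons x xs)
  then have "x choose k = (x - 1 choose k) + (x - 1 choose (k - 1))"
    using choose_reduce_nat[of x k] by auto
  with Cons show ?case by simp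
qed simp

lemma cascade_sum_pred_pascal:
  "is_cascade k a \<Longrightarrow> 1 \<le> k \<Longrightarrow>
   cascade_sum (k - 1) a = cascade_sum (k - 1) (decr a) + cascade_sum (k - 2) (take (k - 1) (decr a))"
proof (induction a arbitrary: k)
  case (Cons x xs)
  show ?case
  proof (cases "k = 1")
    case True
    with Cons.prems have "xs = []" using is_cascade_length_le[of "k - 1" xs] by auto
    with True show ?thesis by simp
  next
    case False
    with Cons.prems obtain m where k: "k = Suc (Suc m)" by (cases k; cases "k - 1") auto
    have "x choose (k - 1) = (x - 1 choose (k - 1)) + (x - 1 choose (k - 2))"
      using choose_reduce_nat[of x "k - 1"] Cons.prems k by auto
    moreover have "cascade_sum (k - 2) xs =
        cascade_sum (k - 2) (decr xs) + cascade_sum (k - 3) (take (k - 2) (decr xs))"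
      using Cons.IH[of "k - 1"] Cons.prems k by (simp add: numeral_3_eq_3)
    ultimately show ?thesis using k by (simp add: numeral_3_eq_3)
  qed
qed simp

lemma is_cascade_take_decr: "is_cascade k a \<Longrightarrow> is_cascade (k - 1) (take (k - 1) (decr a))"
proof (induction a arbitrary: k)
  case (Cons x xs)
  show ?case
  proof (cases "k = 1")
    case False
    with Cons.prems obtain m where k: "k = Suc (Suc m)" by (cases k; cases "k - 1") auto
    have "\<forall>y\<in>set (take (k - 2) (decr xs)). y < x - 1"
      using Cons.prems is_cascade_pos[of "k - 1" xs] by (fastforce dest!: in_set_takeD)
    moreover have "is_cascade (k - 2) (take (k - 2) (decr xs))"
      using Cons.IH[of "k - 1"] Cons.prems by (simp add: numeral_2_eq_2)
    ultimately show ?thesis using k Cons.prems by auto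
  qed simp
qed simp

text \<open>The list \<open>decr a\<close> need not be a \<open>k\<close>-cascade, as an entry may drop below its index;
  \<open>cascade_lower k a\<close> stops at the first such entry, which changes the \<open>k\<close>-sum by at most one.\<close>

fun cascade_lower :: "nat \<Rightarrow> nat list \<Rightarrow> nat list" where
  "cascade_lower k [] = []"
| "cascade_lower k (x # xs) = (if x = k then [k] else (x - 1) # cascade_lower (k - 1) xs)"

lemma set_cascade_lower:
  "y \<in> set (cascade_lower k xs) \<Longrightarrow> y \<le> k \<or> (\<exists>w\<in>set xs. y = w - 1)"
proof (induction xs arbitrary: k)
  case (Cons x xs)
  show ?case
  proof (cases "x = k")
    case False
    with Cons.prems have "y = x - 1 \<or> y \<in> set (cascade_lower (k - 1) xs)" by simp
    then show ?thesis using Cons.IH[of "k - 1"] by auto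
  qed (use Cons.prems in simp)
qed simp

lemma is_cascade_cascade_lower: "is_cascade k a \<Longrightarrow> is_cascade k (cascade_lower k a)"
proof (induction a arbitrary: k)
  case (Cons x xs)
  have "\<forall>y\<in>set (cascade_lower (k - 1) xs). y < x - 1" if "x \<noteq> k"
    using set_cascade_lower[of _ "k - 1" xs] Cons.prems is_cascade_pos[of "k - 1" xs] that
    by fastforce
  with Cons show ?case by auto
qed simp

lemma cascade_sum_cascade_lower_le:
  "is_cascade k a \<Longrightarrow> cascade_sum k (cascade_lower k a) \<le> cascade_sum k (decr a) + 1"
  by (induction a arbitrary: k) auto

lemma cascade_sum_decr_le:
  "is_cascade m xs \<Longrightarrow> \<forall>y\<in>set xs. y \<le> m \<Longrightarrow> cascade_sum (m - 1) (decr xs) \<le> m"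
proof (induction xs arbitrary: m)
  case (Cons y ys)
  then have y: "y = m" by auto
  have "cascade_sum (m - 2) (decr ys) \<le> m - 1"
    using Cons.IH[of "m - 1"] Cons.prems y by (force simp: numeral_2_eq_2)
  then show ?case using Cons.prems y by (simp add: numeral_2_eq_2; linarith)
qed simp

lemma cascade_sum_decr_le_cascade_lower:
  "is_cascade k a \<Longrightarrow> cascade_sum (k - 1) (decr a) \<le> cascade_sum (k - 1) (cascade_lower k a)"
proof (induction a arbitrary: k)
  case (Cons x xs)
  show ?case
  proof (cases "x = k")
    case True
    have "cascade_sum (k - 2) (decr xs) \<le> k - 1"
      using cascade_sum_decr_le[of "k - 1" xs] Cons.prems True by (force simp: numeral_2_eq_2)
    then show ?thesis using Cons.prems True binomial_pred_self[of k] by (simp add: numeral_2_eq_2; linarith)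
  next
    case False
    then show ?thesis using Cons.IH[of "k - 1"] Cons.prems by (simp add: numeral_2_eq_2)
  qed
qed simp

text \<open>\<open>cascade_raise k a\<close> is a cascade whose \<open>k\<close>-sum exceeds that of \<open>a\<close> by at most one
  while its \<open>(k - 1)\<close>-sum is strictly larger; it turns Kruskal--Katona into an upper bound.\<close>

fun cascade_raise :: "nat \<Rightarrow> nat list \<Rightarrow> nat list" where
  "cascade_raise k [] = [k]"
| "cascade_raise k (x # xs) = (if x < k then [k] else x # cascade_raise (k - 1) xs)"

lemma set_cascade_raise: "y \<in> set (cascade_raise k xs) \<Longrightarrow> y \<le> k \<or> y \<in> set xs"
proof (induction xs arbitrary: k)
  case (Cons x xs)
  show ?case
  proof (cases "x < k")
    case False
    with Cons.prems have "y = x \<or> y \<in> set (cascade_raise (k - 1) xs)" by simp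
    then show ?thesis using Cons.IH[of "k - 1"] by auto
  qed (use Cons.prems in simp)
qed simp

lemma is_cascade_cascade_raise:
  "sorted_wrt (>) a \<Longrightarrow> length a < k \<Longrightarrow> is_cascade k (cascade_raise k a)"
proof (induction a arbitrary: k)
  case (Cons x xs)
  have "\<forall>y\<in>set (cascade_raise (k - 1) xs). y < x" if "\<not> x < k"
    using set_cascade_raise[of _ "k - 1" xs] Cons.prems that by fastforce
  with Cons show ?case by auto
qed simp

lemma cascade_sum_cascade_raise_le: "cascade_sum k (cascade_raise k a) \<le> cascade_sum k a + 1"
  by (induction a arbitrary: k) auto

lemma cascade_sum_less_cascade_raise:
  "sorted_wrt (>) a \<Longrightarrow> length a < k \<Longrightarrow>
   cascade_sum (k - 1) a < cascade_sum (k - 1) (cascade_raise k a)"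
proof (induction a arbitrary: k)
  case Nil
  then show ?case using binomial_pred_self[of k] by simp
next
  case (Cons x xs)
  show ?case
  proof (cases "x < k")
    case True
    have "cascade_sum (k - 1) (x # xs) \<le> length (x # xs)"
      using cascade_sum_le_length[of "x # xs" "k - 1"] Cons.prems True by force
    with Cons.prems True show ?thesis using binomial_pred_self[of k] by simp
  next
    case False
    then show ?thesis using Cons.IH[of "k - 1"] Cons.prems by (simp add: numeral_2_eq_2)
  qed
qed

section \<open>Shadows and shifting\<close>

definition shadow :: "'a set set \<Rightarrow> 'a set set" where
  "shadow F = {A - {x} | A x. A \<in> F \<and> x \<in> A}"

abbreviation ksubsets :: "'a set \<Rightarrow> nat \<Rightarrow> 'a set set" where
  "ksubsets X q \<equiv> {A. A \<subseteq> X \<and> card A = q}"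

lemma Diff_singleton_in_shadow: "A \<in> F \<Longrightarrow> x \<in> A \<Longrightarrow> A - {x} \<in> shadow F"
  unfolding shadow_def by blast

lemma shadowE:
  assumes "B \<in> shadow F"
  obtains A x where "A \<in> F" "x \<in> A" "B = A - {x}"
  using assms unfolding shadow_def by blast

lemma finite_ksubsets_family: "finite X \<Longrightarrow> F \<subseteq> ksubsets X q \<Longrightarrow> finite F"
  by (rule finite_subset[of _ "Pow X"]) auto

lemma shadow_ksubsets: "finite X \<Longrightarrow> F \<subseteq> ksubsets X q \<Longrightarrow> shadow F \<subseteq> ksubsets X (q - 1)"
  unfolding shadow_def by (auto dest: finite_subset)

lemma finite_shadow: "finite X \<Longrightarrow> F \<subseteq> ksubsets X q \<Longrightarrow> finite (shadow F)"
  by (rule finite_ksubsets_family[OF _ shadow_ksubsets])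

lemma inj_on_Diff_singleton: "inj_on (\<lambda>x. A - {x}) A"
proof (rule inj_onI)
  fix x y assume x: "x \<in> A" and eq: "A - {x} = A - {y}"
  have "x \<notin> A - {y}" unfolding eq[symmetric] by simp
  with x show "x = y" by simp
qed

lemma card_le_card_shadow:
  assumes "finite (shadow K)" "A \<in> K"
  shows "card A \<le> card (shadow K)"
proof -
  have "card A = card ((\<lambda>x. A - {x}) ` A)"
    using card_image[OF inj_on_Diff_singleton, of A] by simp
  also have "\<dots> \<le> card (shadow K)"
    by (rule card_mono[OF assms(1)]) (auto intro: Diff_singleton_in_shadow[OF assms(2)])
  finally show ?thesis .
qed

lemma ksubsets_family_empty_if_card_shadow_less:
  assumes "finite X" "F \<subseteq> ksubsets X k" "card (shadow F) < k"
  shows "F = {}"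
proof (rule ccontr)
  assume "F \<noteq> {}"
  then obtain A where "A \<in> F" by blast
  then have "k \<le> card (shadow F)"
    using card_le_card_shadow[OF finite_shadow[OF assms(1,2)]] assms(2) by fastforce
  with assms(3) show False by simp
qed

definition shift :: "'a \<Rightarrow> 'a \<Rightarrow> 'a set \<Rightarrow> 'a set" where
  "shift z x A = (if x \<in> A \<and> z \<notin> A then insert z (A - {x}) else A)"

definition shift_family :: "'a \<Rightarrow> 'a \<Rightarrow> 'a set set \<Rightarrow> 'a set set" where
  "shift_family z x F = {A \<in> F. shift z x A \<in> F} \<union> {shift z x A | A. A \<in> F \<and> shift z x A \<notin> F}"

lemma shift_moved: "shift z x A \<noteq> A \<Longrightarrow> x \<in> A \<and> z \<notin> A \<and> shift z x A = insert z (A - {x})"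
  unfolding shift_def by (cases "x \<in> A \<and> z \<notin> A") simp_all

lemma shift_family_eq_image:
  "shift_family z x F = (\<lambda>A. if shift z x A \<in> F then A else shift z x A) ` F"
  unfolding shift_family_def by auto

lemma shift_inj_on_moved:
  assumes "x \<in> A" "z \<notin> A" "x \<in> B" "z \<notin> B" "insert z (A - {x}) = insert z (B - {x})"
  shows "A = B"
proof -
  have "A - {x} = insert z (A - {x}) - {z}" "B - {x} = insert z (B - {x}) - {z}"
    using assms(2,4) by auto
  then have "A - {x} = B - {x}" using assms(5) by simp
  then show ?thesis using assms(1,3) by (metis insert_Diff)
qed

lemma card_shift_family: "finite F \<Longrightarrow> card (shift_family z x F) = card F"
proof -
  assume "finite F"
  have "inj_on (\<lambda>A. if shift z x A \<in> F then A else shift z x A) F"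
  proof (rule inj_onI)
    fix A B assume A: "A \<in> F" and B: "B \<in> F"
      and eq: "(if shift z x A \<in> F then A else shift z x A) = (if shift z x B \<in> F then B else shift z x B)"
    show "A = B"
    proof (cases "shift z x A \<in> F"; cases "shift z x B \<in> F")
      assume moved: "shift z x A \<notin> F" "shift z x B \<notin> F"
      have "shift z x A \<noteq> A" "shift z x B \<noteq> B" using A B moved by auto
      note shift_moved[OF this(1)] shift_moved[OF this(2)]
      moreover have "shift z x A = shift z x B" using eq moved by simp
      ultimately show ?thesis using shift_inj_on_moved[of x A z B] by simp
    qed (use eq A B in simp_all)
  qed
  then show ?thesis unfolding shift_family_eq_image using \<open>finite F\<close> card_image by blast
qed

lemma shift_familyE:
  assumes "A \<in> shift_family z x F"
  obtains "A \<in> F" "shift z x A \<in> F"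
    | D where "D \<in> F" "shift z x D \<notin> F" "A = shift z x D"
  using assms unfolding shift_family_def by blast

lemma shift_ksubsets:
  assumes "finite X" "z \<in> X" "A \<in> ksubsets X q"
  shows "shift z x A \<in> ksubsets X q"
proof (cases "x \<in> A \<and> z \<notin> A")
  case True
  have "finite A" using assms finite_subset by blast
  with True have "card (insert z (A - {x})) = card A"
    by (simp add: card_Diff_singleton card_gt_0_iff) (metis card_Diff1_less card_gt_0_iff Suc_pred empty_iff)
  with True assms show ?thesis unfolding shift_def by auto
qed (use assms in \<open>auto simp: shift_def\<close>)

lemma shift_family_ksubsets:
  "finite X \<Longrightarrow> z \<in> X \<Longrightarrow> F \<subseteq> ksubsets X q \<Longrightarrow> shift_family z x F \<subseteq> ksubsets X q"
  unfolding shift_family_def using shift_ksubsets[of X z] by blast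

lemma shift_family_memI: "A \<in> F \<Longrightarrow> shift z x A \<in> F \<Longrightarrow> A \<in> shift_family z x F"
  and shift_family_memI_shift: "D \<in> F \<Longrightarrow> shift z x D \<notin> F \<Longrightarrow> shift z x D \<in> shift_family z x F"
  unfolding shift_family_def by blast+

lemma Diff_singleton_in_shift_family_shadow_kept:
  assumes C: "C \<in> F" "shift z x C \<in> F" and y: "y \<in> C"
  shows "C - {y} \<in> shift_family z x (shadow F)"
proof (cases "shift z x (C - {y}) \<in> shadow F")
  case True
  then show ?thesis by (rule shift_family_memI[OF Diff_singleton_in_shadow[OF C(1) y]])
next
  case False
  have "C - {y} \<in> shadow F" using Diff_singleton_in_shadow[OF C(1) y] .
  with False have "shift z x (C - {y}) \<noteq> C - {y}" by (intro notI) simp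
  from shift_moved[OF this] have xz: "x \<in> C" "x \<noteq> y" "z \<notin> C - {y}"
    and shift_B: "shift z x (C - {y}) = insert z (C - {y} - {x})"
    by auto
  have "shift z x (C - {y}) \<in> shadow F"
  proof (cases "z \<in> C")
    case False
    then have "shift z x C = insert z (C - {x})" using xz unfolding shift_def by simp
    moreover have "y \<in> insert z (C - {x})" using y xz by simp
    ultimately have "insert z (C - {x}) - {y} \<in> shadow F"
      using Diff_singleton_in_shadow[OF C(2)] by simp
    moreover have "insert z (C - {x}) - {y} = shift z x (C - {y})"
      unfolding shift_B using xz y False by auto
    ultimately show ?thesis by simp
  next
    case True
    then have "y = z" using xz by simp
    then have "C - {x} = shift z x (C - {y})" unfolding shift_B using xz True by auto
    then show ?thesis using Diff_singleton_in_shadow[OF C(1) xz(1)] by simp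
  qed
  with False show ?thesis by simp
qed

lemma Diff_singleton_in_shift_family_shadow_moved:
  assumes D: "D \<in> F" "shift z x D \<notin> F" and y: "y \<in> shift z x D"
  shows "shift z x D - {y} \<in> shift_family z x (shadow F)"
proof -
  from D have "shift z x D \<noteq> D" by (intro notI) simp
  from shift_moved[OF this] have xz: "x \<in> D" "z \<notin> D" and C: "shift z x D = insert z (D - {x})"
    by auto
  show ?thesis
  proof (cases "y = z")
    case True
    then have "shift z x D - {y} = D - {x}" using C xz by auto
    moreover have "shift z x (D - {x}) = D - {x}" unfolding shift_def by auto
    ultimately show ?thesis
      using shift_family_memI[of "D - {x}" "shadow F" z x] Diff_singleton_in_shadow[OF D(1) xz(1)]
      by simp
  next
    case False
    then have yD: "y \<in> D" "y \<noteq> x" using y C by auto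
    have DyF: "D - {y} \<in> shadow F" using Diff_singleton_in_shadow[OF D(1) yD(1)] .
    have B: "shift z x D - {y} = shift z x (D - {y})"
      using C xz yD False unfolding shift_def by auto
    show ?thesis
    proof (cases "shift z x (D - {y}) \<in> shadow F")
      case True
      moreover have "shift z x (shift z x (D - {y})) = shift z x (D - {y})"
        using xz yD unfolding shift_def by auto
      ultimately show ?thesis using B shift_family_memI[of "shift z x (D - {y})"] by simp
    next
      case False
      then show ?thesis using shift_family_memI_shift[OF DyF False] B by simp
    qed
  qed
qed

lemma shadow_shift_family_subset: "shadow (shift_family z x F) \<subseteq> shift_family z x (shadow F)"
proof
  fix B assume "B \<in> shadow (shift_family z x F)"
  then obtain C y where C: "C \<in> shift_family z x F" "y \<in> C" "B = C - {y}" by (rule shadowE)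
  from C(1) show "B \<in> shift_family z x (shadow F)"
  proof (cases rule: shift_familyE)
    case 1
    then show ?thesis using Diff_singleton_in_shift_family_shadow_kept[OF 1 C(2)] C(3) by simp
  next
    case (2 D)
    then show ?thesis using Diff_singleton_in_shift_family_shadow_moved[OF 2(1,2)] C(2,3) by simp
  qed
qed

definition shift_stable_on :: "'a set \<Rightarrow> 'a \<Rightarrow> 'a set set \<Rightarrow> bool" where
  "shift_stable_on Y z F \<longleftrightarrow> (\<forall>A\<in>F. \<forall>x\<in>Y. x \<in> A \<and> z \<notin> A \<longrightarrow> insert z (A - {x}) \<in> F)"

lemma shift_stable_on_shift_family:
  assumes "shift_stable_on Y z F"
  shows "shift_stable_on (insert y Y) z (shift_family z y F)"
  unfolding shift_stable_on_def
proof (intro ballI impI)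
  fix A x assume A: "A \<in> shift_family z y F" and x: "x \<in> insert y Y" and xz: "x \<in> A \<and> z \<notin> A"
  have "A \<in> F \<and> shift z y A \<in> F"
    using A
  proof (cases rule: shift_familyE)
    case (2 D)
    then have "shift z y D \<noteq> D" by (intro notI) simp
    then have "z \<in> A" using shift_moved[of z y D] 2(3) by simp
    with xz show ?thesis by simp
  qed simp
  then have AF: "A \<in> F" and shA: "shift z y A \<in> F" by simp_all
  have "shift z y (insert z (A - {x})) = insert z (A - {x})" unfolding shift_def by simp
  then have keep: "insert z (A - {x}) \<in> F \<Longrightarrow> insert z (A - {x}) \<in> shift_family z y F"
    using shift_family_memI[of "insert z (A - {x})" F z y] by simp
  show "insert z (A - {x}) \<in> shift_family z y F"
  proof (cases "x = y")
    case True
    then have "shift z y A = insert z (A - {x})" using xz unfolding shift_def by simp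
    with shA keep show ?thesis by simp
  next
    case False
    then show ?thesis using keep assms AF xz x unfolding shift_stable_on_def by simp
  qed
qed

lemma shift_stable_family_exists:
  assumes "finite X" "z \<in> X" "F \<subseteq> ksubsets X q"
  obtains F' where "F' \<subseteq> ksubsets X q" "card F' = card F" "card (shadow F') \<le> card (shadow F)"
    "shift_stable_on UNIV z F'"
proof -
  have "\<exists>F'. F' \<subseteq> ksubsets X q \<and> card F' = card F \<and> card (shadow F') \<le> card (shadow F) \<and>
           shift_stable_on Y z F'"
    if "finite Y" for Y
    using that
  proof (induction Y rule: finite_induct)
    case empty
    show ?case using assms(3) unfolding shift_stable_on_def by blast
  next
    case (insert y Y)
    then obtain F' where F': "F' \<subseteq> ksubsets X q" "card F' = card F" "card (shadow F') \<le> card (shadow F)"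
      "shift_stable_on Y z F'" by blast
    have fin: "finite F'" "finite (shadow F')"
      using finite_ksubsets_family[OF assms(1) F'(1)] finite_shadow[OF assms(1) F'(1)] .
    have "finite (shift_family z y (shadow F'))"
      unfolding shift_family_eq_image using fin(2) by (rule finite_imageI)
    then have "card (shadow (shift_family z y F')) \<le> card (shift_family z y (shadow F'))"
      using shadow_shift_family_subset by (rule card_mono)
    also have "\<dots> = card (shadow F')" using card_shift_family[OF fin(2)] .
    finally show ?case
      using shift_family_ksubsets[OF assms(1,2) F'(1)] card_shift_family[OF fin(1)] F'(2,3)
        shift_stable_on_shift_family[OF F'(4)]
      by (intro exI[of _ "shift_family z y F'"]) auto
  qed
  from this[OF assms(1)] obtain F' where "F' \<subseteq> ksubsets X q" "card F' = card F"
    "card (shadow F') \<le> card (shadow F)" "shift_stable_on X z F'" by blast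
  moreover from this have "shift_stable_on UNIV z F'" unfolding shift_stable_on_def by blast
  ultimately show ?thesis using that by blast
qed

definition link :: "'a set set \<Rightarrow> 'a set \<Rightarrow> 'a set set" where
  "link F I = (\<lambda>A. A - I) ` {A \<in> F. I \<subseteq> A}"

lemma link_ksubsets:
  assumes "finite X" "F \<subseteq> ksubsets X q" "I \<subseteq> X"
  shows "link F I \<subseteq> ksubsets (X - I) (q - card I)"
proof
  fix B assume "B \<in> link F I"
  then obtain A where A: "A \<in> F" "I \<subseteq> A" "B = A - I" unfolding link_def by blast
  then have "finite I" "A \<subseteq> X" "card A = q" using assms finite_subset by blast+
  with A show "B \<in> ksubsets (X - I) (q - card I)" by (auto simp: card_Diff_subset)
qed

lemma card_link_le: "finite F \<Longrightarrow> card (link F I) \<le> card {A \<in> F. I \<subseteq> A}"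
  unfolding link_def by (rule card_image_le) simp

lemma card_filter_partition:
  "finite F \<Longrightarrow> card F = card {A \<in> F. P A} + card {A \<in> F. \<not> P A}"
proof -
  assume "finite F"
  have "F = {A \<in> F. P A} \<union> {A \<in> F. \<not> P A}" by blast
  also have "card \<dots> = card {A \<in> F. P A} + card {A \<in> F. \<not> P A}"
    by (rule card_Un_disjoint) (use \<open>finite F\<close> in auto)
  finally show ?thesis .
qed

lemma card_eq_card_link_singleton_plus:
  assumes "finite F"
  shows "card F = card (link F {z}) + card {A \<in> F. z \<notin> A}"
proof -
  have "inj_on (\<lambda>A. A - {z}) {A \<in> F. {z} \<subseteq> A}"
  proof (rule inj_onI)
    fix A B assume "A \<in> {A \<in> F. {z} \<subseteq> A}" "B \<in> {A \<in> F. {z} \<subseteq> A}" "A - {z} = B - {z}"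
    then show "A = B" by (metis insert_Diff insert_subset mem_Collect_eq)
  qed
  then have "card (link F {z}) = card {A \<in> F. z \<in> A}"
    unfolding link_def by (simp add: card_image)
  moreover have "card F = card {A \<in> F. z \<in> A} + card {A \<in> F. z \<notin> A}"
    using assms by (rule card_filter_partition)
  ultimately show ?thesis by simp
qed

text \<open>Deleting \<open>z\<close> from the sets through \<open>z\<close>, and deleting some other element from them,
  produces disjoint parts of the shadow.\<close>

lemma card_link_singleton_plus_shadow_le:
  assumes "finite X" "F \<subseteq> ksubsets X q"
  shows "card (link F {z}) + card (shadow (link F {z})) \<le> card (shadow F)"
proof -
  let ?L = "link F {z}"
  have L_sub: "?L \<subseteq> shadow F"
    unfolding link_def using Diff_singleton_in_shadow by fastforce
  have insert_sub: "insert z ` shadow ?L \<subseteq> shadow F"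
  proof
    fix C assume "C \<in> insert z ` shadow ?L"
    then obtain A y where A: "A \<in> F" "z \<in> A" "y \<in> A - {z}" "C = insert z (A - {z} - {y})"
      unfolding link_def by (auto elim!: shadowE)
    then have "C = A - {y}" by auto
    then show "C \<in> shadow F" using Diff_singleton_in_shadow[OF A(1)] A(3) by simp
  qed
  have z_notin: "z \<notin> B" if "B \<in> shadow ?L" for B
    using that unfolding link_def by (auto elim!: shadowE)
  have "inj_on (insert z) (shadow ?L)"
  proof (rule inj_onI)
    fix B C assume "B \<in> shadow ?L" "C \<in> shadow ?L" "insert z B = insert z C"
    with z_notin show "B = C" by (metis Diff_insert_absorb)
  qed
  then have "card (insert z ` shadow ?L) = card (shadow ?L)" by (rule card_image)
  moreover have "card (?L \<union> insert z ` shadow ?L) = card ?L + card (insert z ` shadow ?L)"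
  proof (rule card_Un_disjoint)
    have fin: "finite (shadow F)" using finite_shadow[OF assms] .
    show "finite ?L" using rev_finite_subset[OF fin L_sub] .
    show "finite (insert z ` shadow ?L)" using rev_finite_subset[OF fin insert_sub] .
    show "?L \<inter> insert z ` shadow ?L = {}" unfolding link_def by auto
  qed
  moreover have "card (?L \<union> insert z ` shadow ?L) \<le> card (shadow F)"
    using L_sub insert_sub by (intro card_mono finite_shadow[OF assms]) simp
  ultimately show ?thesis by simp
qed

lemma shadow_avoiding_subset_link:
  "shift_stable_on UNIV z F \<Longrightarrow> shadow {A \<in> F. z \<notin> A} \<subseteq> link F {z}"
proof
  fix B assume stable: "shift_stable_on UNIV z F" and "B \<in> shadow {A \<in> F. z \<notin> A}"
  then obtain A x where A: "A \<in> F" "z \<notin> A" "x \<in> A" "B = A - {x}" by (auto elim!: shadowE)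
  then have "insert z (A - {x}) \<in> F" using stable unfolding shift_stable_on_def by blast
  moreover have "insert z (A - {x}) - {z} = B" using A by auto
  ultimately show "B \<in> link F {z}" unfolding link_def
    using image_eqI[of B "\<lambda>A. A - {z}" "insert z (A - {x})"] by blast
qed

lemma shadow_split:
  assumes "finite X" "z \<in> X" "F \<subseteq> ksubsets X q"
  obtains F0 F1 where "F0 \<subseteq> ksubsets (X - {z}) (q - 1)" "F1 \<subseteq> ksubsets (X - {z}) q"
    "card F = card F0 + card F1" "shadow F1 \<subseteq> F0"
    "card F0 + card (shadow F0) \<le> card (shadow F)"
proof -
  obtain F' where F': "F' \<subseteq> ksubsets X q" "card F' = card F" "card (shadow F') \<le> card (shadow F)"
    "shift_stable_on UNIV z F'"
    using shift_stable_family_exists[OF assms] .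
  show ?thesis
  proof (rule that)
    show "link F' {z} \<subseteq> ksubsets (X - {z}) (q - 1)"
      using link_ksubsets[OF assms(1) F'(1), of "{z}"] assms(2) by simp
    show "{A \<in> F'. z \<notin> A} \<subseteq> ksubsets (X - {z}) q" using F'(1) by blast
    show "card F = card (link F' {z}) + card {A \<in> F'. z \<notin> A}"
      using card_eq_card_link_singleton_plus[OF finite_ksubsets_family[OF assms(1) F'(1)]] F'(2)
      by simp
    show "shadow {A \<in> F'. z \<notin> A} \<subseteq> link F' {z}"
      using shadow_avoiding_subset_link[OF F'(4)] .
    show "card (link F' {z}) + card (shadow (link F' {z})) \<le> card (shadow F)"
      using card_link_singleton_plus_shadow_le[OF assms(1) F'(1), of z] F'(3) by linarith
  qed
qed

section \<open>The Kruskal--Katona theorem\<close>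

theorem kruskal_katona:
  "finite X \<Longrightarrow> F \<subseteq> ksubsets X q \<Longrightarrow> is_cascade q a \<Longrightarrow> cascade_sum q a \<le> card F \<Longrightarrow>
   cascade_sum (q - 1) a \<le> card (shadow F)"
proof (induction "card X" arbitrary: X q F a rule: less_induct)
  case less
  note X = less.prems(1) and F = less.prems(2) and a = less.prems(3) and large = less.prems(4)
  show ?case
  proof (cases a)
    case (Cons x xs)
    have q: "1 \<le> q" using a Cons by simp
    have "F \<noteq> {}" using cascade_sum_Cons_pos[of q x xs] a large Cons by auto
    then obtain A where "A \<in> F" by blast
    with F q have "A \<subseteq> X" "A \<noteq> {}" by auto
    then obtain z where z: "z \<in> X" by blast
    obtain F0 F1 where F0: "F0 \<subseteq> ksubsets (X - {z}) (q - 1)" and F1: "F1 \<subseteq> ksubsets (X - {z}) q"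
      and card_F: "card F = card F0 + card F1" and shadow_F1: "shadow F1 \<subseteq> F0"
      and shadow_F: "card F0 + card (shadow F0) \<le> card (shadow F)"
      using shadow_split[OF X z F] .
    have IH: "cascade_sum (r - 1) b \<le> card (shadow G)"
      if "G \<subseteq> ksubsets (X - {z}) r" "is_cascade r b" "cascade_sum r b \<le> card G" for G r b
      using less.hyps[OF card_Diff1_less[OF X z] _ that] X by simp
    have fin_F0: "finite F0" using finite_ksubsets_family[OF _ F0] X by simp
    have F0_large: "cascade_sum (q - 1) (decr a) \<le> card F0"
    proof (rule ccontr)
      assume small: "\<not> ?thesis"
      then have "cascade_sum q (cascade_lower q a) \<le> card F1"
        using cascade_sum_pascal[OF a] cascade_sum_cascade_lower_le[OF a] card_F large by linarith
      then have "cascade_sum (q - 1) (cascade_lower q a) \<le> card (shadow F1)"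
        using IH[OF F1 is_cascade_cascade_lower[OF a]] by simp
      also have "\<dots> \<le> card F0" using card_mono[OF fin_F0 shadow_F1] .
      finally show False
        using cascade_sum_decr_le_cascade_lower[OF a] small by linarith
    qed
    have "cascade_sum (q - 1) (take (q - 1) (decr a)) \<le> card F0"
      using cascade_sum_take_le F0_large le_trans by blast
    then have "cascade_sum (q - 2) (take (q - 1) (decr a)) \<le> card (shadow F0)"
      using IH[OF F0 is_cascade_take_decr[OF a]] by (simp add: numeral_2_eq_2)
    then show ?thesis
      using cascade_sum_pred_pascal[OF a q] F0_large shadow_F by linarith
  qed simp
qed

text \<open>Otherwise \<open>cascade_raise k a\<close> would violate Kruskal--Katona.\<close>

corollary card_le_cascade_sum_if_card_shadow_le:
  assumes "finite X" "K \<subseteq> ksubsets X k" "sorted_wrt (>) a" "length a < k"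
    and "card (shadow K) \<le> cascade_sum (k - 1) a"
  shows "card K \<le> cascade_sum k a"
proof (rule ccontr)
  assume "\<not> ?thesis"
  then have "cascade_sum k (cascade_raise k a) \<le> card K"
    using cascade_sum_cascade_raise_le[of k a] by linarith
  then have "cascade_sum (k - 1) (cascade_raise k a) \<le> card (shadow K)"
    using kruskal_katona[OF assms(1,2) is_cascade_cascade_raise[OF assms(3,4)]] by simp
  then show False using cascade_sum_less_cascade_raise[OF assms(3,4)] assms(5) by linarith
qed

lemma gbinomial_nonneg_real: "real k - 1 \<le> w \<Longrightarrow> 0 \<le> w gchoose k"
  unfolding gbinomial_altdef_of_nat by (rule prod_nonneg) auto

lemma gbinomial_pos_real: "real k - 1 < w \<Longrightarrow> 0 < w gchoose k"
  unfolding gbinomial_altdef_of_nat by (rule prod_pos) auto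

lemma gbinomial_strict_mono_real:
  assumes k: "1 \<le> k" and w: "real k - 1 < w" and ww: "w < w'"
  shows "w gchoose k < w' gchoose k"
  unfolding gbinomial_altdef_of_nat
proof (rule prod_mono_strict[where i=0])
  show "(w - real 0) / real (k - 0) < (w' - real 0) / real (k - 0)"
    using k ww by (simp add: divide_strict_right_mono)
  fix i assume i: "i \<in> {0..<k}"
  then have "0 \<le> w - real i" "w - real i \<le> w' - real i" "0 < real (k - i)" using w ww by auto
  then show "0 \<le> (w - real i) / real (k - i) \<and> (w - real i) / real (k - i) \<le> (w' - real i) / real (k - i)"
    by (simp add: divide_right_mono)
qed (use k w ww in \<open>auto intro!: divide_pos_pos\<close>)

lemma of_nat_gchoose_pred_self: "1 \<le> k \<Longrightarrow> real k gchoose (k - 1) = real k"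
  using binomial_pred_self[of k] by (simp flip: binomial_gbinomial)

text \<open>The two halves of the induction step of Lov\'asz's theorem below: \<open>F0\<close> is the link of the
  shifted vertex and \<open>F1\<close> the family of sets avoiding it, and the induction hypothesis on the
  smaller ground set \<open>Y\<close> is an assumption.  Pascal's rule for \<open>y gchoose k\<close> combines them.\<close>

lemma lovasz_step_link:
  assumes IH: "\<And>G j w. G \<subseteq> ksubsets Y j \<Longrightarrow> 2 \<le> j \<Longrightarrow> real j \<le> w \<Longrightarrow>
      real (card (shadow G)) \<le> w gchoose (j - 1) \<Longrightarrow> real (card G) \<le> w gchoose j"
    and Y: "finite Y" and F0: "F0 \<subseteq> ksubsets Y (k - 1)" and k: "2 \<le> k" "real k \<le> y"
    and sum: "real (card F0) + real (card (shadow F0)) \<le> y gchoose (k - 1)"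
  shows "real (card F0) \<le> (y - 1) gchoose (k - 1)"
proof (rule ccontr)
  assume big: "\<not> ?thesis"
  obtain m where m: "k = Suc (Suc m)" using k(1) by (metis add_2_eq_Suc le_Suc_ex)
  have "y gchoose Suc m = ((y - 1) gchoose m) + ((y - 1) gchoose Suc m)"
    using gbinomial_Suc_Suc[of "y - 1" m] by simp
  then have small: "real (card (shadow F0)) < (y - 1) gchoose m"
    using sum big m by simp
  show False
  proof (cases m)
    case 0
    then have "F0 = {}"
      using small m ksubsets_family_empty_if_card_shadow_less[OF Y F0] by simp
    then show False using big gbinomial_nonneg_real[of "k - 1" "y - 1"] k by simp
  next
    case (Suc m')
    have "real (card F0) \<le> (y - 1) gchoose (k - 1)"
      using IH[OF F0, of "y - 1"] small k m Suc by simp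
    with big show False by simp
  qed
qed

lemma lovasz_step_avoiding:
  assumes IH: "\<And>G j w. G \<subseteq> ksubsets Y j \<Longrightarrow> 2 \<le> j \<Longrightarrow> real j \<le> w \<Longrightarrow>
      real (card (shadow G)) \<le> w gchoose (j - 1) \<Longrightarrow> real (card G) \<le> w gchoose j"
    and Y: "finite Y" and F1: "F1 \<subseteq> ksubsets Y k" and k: "2 \<le> k" "real k \<le> y"
    and shadow_F1: "real (card (shadow F1)) \<le> (y - 1) gchoose (k - 1)"
  shows "real (card F1) \<le> (y - 1) gchoose k"
proof (cases "real k \<le> y - 1")
  case True
  show ?thesis by (rule IH[OF F1 k(1) True shadow_F1])
next
  case False
  have "(y - 1) gchoose (k - 1) < real k gchoose (k - 1)"
    using gbinomial_strict_mono_real[of "k - 1" "y - 1" "real k"] k False by simp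
  then have "card (shadow F1) < k"
    using shadow_F1 of_nat_gchoose_pred_self[of k] k by simp
  then have "F1 = {}" by (rule ksubsets_family_empty_if_card_shadow_less[OF Y F1])
  then show ?thesis using gbinomial_nonneg_real[of k "y - 1"] k by simp
qed

theorem lovasz_kruskal_katona:
  "finite X \<Longrightarrow> K \<subseteq> ksubsets X k \<Longrightarrow> 2 \<le> k \<Longrightarrow> real k \<le> y \<Longrightarrow>
   real (card (shadow K)) \<le> y gchoose (k - 1) \<Longrightarrow> real (card K) \<le> y gchoose k"
proof (induction "card X" arbitrary: X k K y rule: less_induct)
  case less
  note X = less.prems(1) and K = less.prems(2) and k = less.prems(3,4) and shadow_K = less.prems(5)
  show ?case
  proof (cases "K = {}")
    case True
    then show ?thesis using gbinomial_nonneg_real[of k y] k by simp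
  next
    case False
    then obtain A where "A \<in> K" by blast
    with K k have "A \<subseteq> X" "A \<noteq> {}" by auto
    then obtain z where z: "z \<in> X" by blast
    obtain F0 F1 where F0: "F0 \<subseteq> ksubsets (X - {z}) (k - 1)" and F1: "F1 \<subseteq> ksubsets (X - {z}) k"
      and card_K: "card K = card F0 + card F1" and shadow_F1: "shadow F1 \<subseteq> F0"
      and shadow_K': "card F0 + card (shadow F0) \<le> card (shadow K)"
      using shadow_split[OF X z K] .
    note IH = less.hyps[OF card_Diff1_less[OF X z] finite_Diff[OF X]]
    have "real (card F0) + real (card (shadow F0)) \<le> y gchoose (k - 1)"
      using shadow_K' shadow_K by (simp flip: of_nat_add)
    from lovasz_step_link[OF IH finite_Diff[OF X] F0 k this]
    have F0_le: "real (card F0) \<le> (y - 1) gchoose (k - 1)" .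
    moreover have "card (shadow F1) \<le> card F0"
      using card_mono[OF finite_ksubsets_family[OF _ F0] shadow_F1] X by simp
    ultimately have "real (card F1) \<le> (y - 1) gchoose k"
      using lovasz_step_avoiding[OF IH finite_Diff[OF X] F1 k] by simp
    moreover have "y gchoose k = ((y - 1) gchoose (k - 1)) + ((y - 1) gchoose k)"
      using gbinomial_Suc_Suc[of "y - 1" "k - 1"] k by simp
    ultimately show ?thesis using card_K F0_le by simp
  qed
qed

section \<open>Cliques in hypergraphs\<close>

lemma cliques_ksubsets: "cliques W q G r \<subseteq> ksubsets W r"
  unfolding cliques_def by auto

lemma cliques_self_subset: "cliques W q G q \<subseteq> G"
  unfolding cliques_def by auto

lemma shadow_cliques_Suc: "shadow (cliques W q G (Suc r)) \<subseteq> cliques W q G r"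
proof
  fix B assume "B \<in> shadow (cliques W q G (Suc r))"
  then obtain T x where T: "T \<in> cliques W q G (Suc r)" "x \<in> T" "B = T - {x}" by (rule shadowE)
  then have "finite T" unfolding cliques_def by (auto intro: card_ge_0_finite)
  with T show "B \<in> cliques W q G r" unfolding cliques_def by auto
qed

lemma binomial_le_card_if_clique:
  assumes "T \<in> cliques W q G r" "finite W" "finite G"
  shows "r choose q \<le> card G"
proof -
  have "finite T" "card T = r" "ksubsets T q \<subseteq> G"
    using assms(1,2) unfolding cliques_def by (auto dest: finite_subset)
  then show ?thesis using card_mono[OF assms(3)] n_subsets[of T q] by metis
qed

lemma card_cliques_le_cascade_sum:
  assumes W: "finite W" and G: "finite G" "card G \<le> cascade_sum q a" and a: "is_cascade q a"
    and "q \<le> r"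
  shows "card (cliques W q G r) \<le> cascade_sum r a"
  using \<open>q \<le> r\<close>
proof (induction r rule: dec_induct)
  case base
  show ?case using card_mono[OF G(1) cliques_self_subset, of W q] G(2) by linarith
next
  case (step r)
  have "card (shadow (cliques W q G (Suc r))) \<le> card (cliques W q G r)"
    using card_mono[OF finite_ksubsets_family[OF W cliques_ksubsets] shadow_cliques_Suc] .
  then show ?case
    using card_le_cascade_sum_if_card_shadow_le[OF W cliques_ksubsets is_cascade_sorted[OF a]]
      is_cascade_length_le[OF a] step by simp
qed

lemma card_cliques_le_gchoose:
  assumes W: "finite W" and G: "finite G" "real (card G) \<le> y gchoose q"
    and "1 \<le> q" "q \<le> r" "real r \<le> y"
  shows "real (card (cliques W q G r)) \<le> y gchoose r"
  using \<open>q \<le> r\<close> \<open>real r \<le> y\<close>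
proof (induction r rule: dec_induct)
  case base
  show ?case using card_mono[OF G(1) cliques_self_subset, of W q] G(2) by (meson of_nat_le_iff order.trans)
next
  case (step r)
  have "card (shadow (cliques W q G (Suc r))) \<le> card (cliques W q G r)"
    using card_mono[OF finite_ksubsets_family[OF W cliques_ksubsets] shadow_cliques_Suc] .
  then have "real (card (shadow (cliques W q G (Suc r)))) \<le> y gchoose (Suc r - 1)"
    using step by simp
  then show ?case
    using lovasz_kruskal_katona[OF W cliques_ksubsets] step \<open>1 \<le> q\<close> by simp
qed

lemma is_sgraph_iff: "is_sgraph V s H \<longleftrightarrow> finite V \<and> H \<subseteq> ksubsets V s"
  unfolding is_sgraph_def by auto

lemma deg_le_max_deg:
  assumes "finite V" "I \<subseteq> V" "card I = i"
  shows "deg H I \<le> max_deg V H i"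
proof -
  have "{deg H I | I. I \<subseteq> V \<and> card I = i} = deg H ` ksubsets V i" by auto
  then have "finite (insert 0 {deg H I | I. I \<subseteq> V \<and> card I = i})" using assms(1) by simp
  moreover have "deg H I \<in> insert 0 {deg H I | I. I \<subseteq> V \<and> card I = i}" using assms(2,3) by blast
  ultimately show ?thesis unfolding max_deg_def by (rule Max_ge)
qed

lemma card_link_le_max_deg:
  assumes "is_sgraph V s H" "I \<subseteq> V" "card I = i"
  shows "card (link H I) \<le> max_deg V H i"
proof -
  have V: "finite V" and "H \<subseteq> ksubsets V s" using assms(1) unfolding is_sgraph_iff by simp_all
  then have "finite H" by (rule finite_ksubsets_family)
  then have "card (link H I) \<le> deg H I" unfolding deg_def by (rule card_link_le)
  also have "\<dots> \<le> max_deg V H i" using deg_le_max_deg[OF V assms(2,3)] .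
  finally show ?thesis .
qed

lemma finite_link:
  assumes "is_sgraph V s H" "I \<subseteq> V"
  shows "finite (link H I)"
proof -
  have V: "finite V" and H: "H \<subseteq> ksubsets V s" using assms(1) unfolding is_sgraph_iff by simp_all
  show ?thesis using finite_ksubsets_family[OF _ link_ksubsets[OF V H assms(2)]] V by simp
qed

lemma Diff_in_cliques_link:
  assumes H: "is_sgraph V s H" and T: "T \<in> cliques V s H t" and I: "I \<subseteq> T" "card I = i" "i \<le> s"
  shows "T - I \<in> cliques V (s - i) (link H I) (t - i)"
proof -
  have TV: "T \<subseteq> V" "card T = t" and clique: "\<And>S. S \<subseteq> T \<Longrightarrow> card S = s \<Longrightarrow> S \<in> H"
    using T unfolding cliques_def by blast+
  have fin: "finite T" "finite I" using H TV(1) I(1) unfolding is_sgraph_def by (auto dest: finite_subset)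
  have "S \<in> link H I" if S: "S \<subseteq> T - I" "card S = s - i" for S
  proof -
    have "finite S" "S \<inter> I = {}" using S fin(1) finite_subset by blast+
    then have "card (S \<union> I) = s" using S(2) I(2,3) card_Un_disjoint[OF _ fin(2)] by simp
    moreover have "S \<union> I \<subseteq> T" using S(1) I(1) by blast
    ultimately have "S \<union> I \<in> H" by (rule clique[rotated])
    moreover have "(S \<union> I) - I = S" using \<open>S \<inter> I = {}\<close> by blast
    ultimately show ?thesis unfolding link_def by blast
  qed
  moreover have "T - I \<subseteq> V" "card (T - I) = t - i"
    using TV I(1,2) fin(2) by (auto simp: card_Diff_subset)
  ultimately show ?thesis unfolding cliques_def by blast
qed

lemma card_cliques_containing_le:
  assumes H: "is_sgraph V s H" and I: "card I = i" "i \<le> s"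
  shows "card {T \<in> cliques V s H t. I \<subseteq> T} \<le> card (cliques V (s - i) (link H I) (t - i))"
proof (rule card_inj_on_le)
  show "inj_on (\<lambda>T. T - I) {T \<in> cliques V s H t. I \<subseteq> T}"
  proof (rule inj_onI)
    fix T T' assume "T \<in> {T \<in> cliques V s H t. I \<subseteq> T}" "T' \<in> {T \<in> cliques V s H t. I \<subseteq> T}"
      and "T - I = T' - I"
    then show "T = T'" by (metis Diff_partition mem_Collect_eq)
  qed
  show "(\<lambda>T. T - I) ` {T \<in> cliques V s H t. I \<subseteq> T} \<subseteq> cliques V (s - i) (link H I) (t - i)"
    using Diff_in_cliques_link[OF H _ _ I] by blast
  have "finite V" using H unfolding is_sgraph_def by simp
  then show "finite (cliques V (s - i) (link H I) (t - i))"
    using finite_ksubsets_family[OF _ cliques_ksubsets] by blast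
qed

text \<open>Double counting: each \<open>t\<close>-set contains \<open>t choose i\<close> many \<open>i\<close>-sets.\<close>

lemma card_mult_choose_eq_sum:
  assumes V: "finite V" and K: "K \<subseteq> ksubsets V t"
  shows "card K * (t choose i) = (\<Sum>I\<in>ksubsets V i. card {T \<in> K. I \<subseteq> T})"
proof -
  have fin: "finite K" "finite (ksubsets V i)" using finite_ksubsets_family[OF V K] V by simp_all
  have "(\<Sum>I\<in>ksubsets V i. card {T \<in> K. I \<subseteq> T})
      = (\<Sum>I\<in>ksubsets V i. \<Sum>T\<in>K. if I \<subseteq> T then 1 else 0)"
    using sum.inter_filter[OF fin(1), of "\<lambda>_. 1 :: nat"] by simp
  also have "\<dots> = (\<Sum>T\<in>K. \<Sum>I\<in>ksubsets V i. if I \<subseteq> T then 1 else 0)" by (rule sum.swap)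
  also have "\<dots> = (\<Sum>T\<in>K. t choose i)"
  proof (rule sum.cong[OF refl])
    fix T assume "T \<in> K"
    then have T: "T \<subseteq> V" "card T = t" "finite T" using K V finite_subset by blast+
    have "(\<Sum>I\<in>ksubsets V i. if I \<subseteq> T then 1 else 0) = card {I \<in> ksubsets V i. I \<subseteq> T}"
      using sum.inter_filter[OF fin(2), of "\<lambda>_. 1 :: nat"] by simp
    also have "{I \<in> ksubsets V i. I \<subseteq> T} = ksubsets T i" using T by auto
    finally show "(\<Sum>I\<in>ksubsets V i. if I \<subseteq> T then 1 else 0) = t choose i"
      using n_subsets[OF T(3)] T(2) by simp
  qed
  finally show ?thesis by simp
qed

lemma num_cliques_le_by_links:
  assumes H: "is_sgraph V s H" and "i \<le> s" "s \<le> t"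
    and links: "\<And>I. I \<subseteq> V \<Longrightarrow> card I = i \<Longrightarrow> real (card (cliques V (s - i) (link H I) (t - i))) \<le> b"
  shows "real (num_cliques V s H t) \<le> real (card V choose i) * b / real (t choose i)"
proof -
  let ?K = "cliques V s H t"
  have V: "finite V" using H unfolding is_sgraph_def by simp
  have "real (card ?K * (t choose i)) = (\<Sum>I\<in>ksubsets V i. real (card {T \<in> ?K. I \<subseteq> T}))"
    by (simp only: card_mult_choose_eq_sum[OF V cliques_ksubsets] of_nat_sum)
  also have "\<dots> \<le> (\<Sum>I\<in>ksubsets V i. b)"
  proof (rule sum_mono)
    fix I assume "I \<in> ksubsets V i"
    then show "real (card {T \<in> ?K. I \<subseteq> T}) \<le> b"
      using card_cliques_containing_le[OF H _ \<open>i \<le> s\<close>, of I t] links[of I] by simp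
  qed
  also have "\<dots> = real (card V choose i) * b" using n_subsets[OF V] by simp
  finally show ?thesis
    using \<open>i \<le> s\<close> \<open>s \<le> t\<close> by (simp add: num_cliques_def pos_le_divide_eq)
qed

lemma num_cliques_le_cascade_bound:
  assumes H: "is_sgraph V s H" and "i < s" "s \<le> t"
    and ns: "strict_cascade (s - i) ns" and deg: "max_deg V H i \<le> cascade_value (s - i) ns"
  shows "real (num_cliques V s H t) \<le> real (card V choose i) * real (cascade_sum (t - i) ns) / real (t choose i)"
proof (rule num_cliques_le_by_links[OF H _ \<open>s \<le> t\<close>])
  fix I assume I: "I \<subseteq> V" "card I = i"
  have V: "finite V" using H unfolding is_sgraph_def by simp
  have "card (link H I) \<le> cascade_sum (s - i) ns"
    using card_link_le_max_deg[OF H I] deg cascade_value_eq_cascade_sum by simp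
  then show "real (card (cliques V (s - i) (link H I) (t - i))) \<le> real (cascade_sum (t - i) ns)"
    using card_cliques_le_cascade_sum[OF V finite_link[OF H I(1)] _ strict_cascade_imp_is_cascade[OF ns]]
      \<open>s \<le> t\<close> by simp
qed (use \<open>i < s\<close> in simp)

lemma num_cliques_eq_0_if_gchoose_small:
  assumes H: "is_sgraph V s H" and "i < s" "real s \<le> x" "x < real t"
    and deg: "real (max_deg V H i) \<le> (x - real i) gchoose (s - i)"
  shows "num_cliques V s H t = 0"
proof (rule ccontr)
  assume "num_cliques V s H t \<noteq> 0"
  then obtain T where T: "T \<in> cliques V s H t" unfolding num_cliques_def by (metis card.empty ex_in_conv)
  then have "T \<subseteq> V" "card T = t" unfolding cliques_def by simp_all
  moreover have "i \<le> t" using assms by linarith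
  ultimately obtain I where I: "I \<subseteq> T" "card I = i" by (metis obtain_subset_with_card_n)
  have V: "finite V" using H unfolding is_sgraph_def by simp
  have "(t - i) choose (s - i) \<le> card (link H I)"
    using binomial_le_card_if_clique[OF Diff_in_cliques_link[OF H T I] V finite_link] H I(1)
      \<open>T \<subseteq> V\<close> \<open>i < s\<close> by fastforce
  also have "\<dots> \<le> max_deg V H i" using card_link_le_max_deg[OF H _ I(2)] I(1) \<open>T \<subseteq> V\<close> by blast
  finally have "real ((t - i) choose (s - i)) \<le> (x - real i) gchoose (s - i)"
    using deg by (meson of_nat_le_iff order.trans)
  moreover have "(x - real i) gchoose (s - i) < real (t - i) gchoose (s - i)"
    using gbinomial_strict_mono_real[of "s - i" "x - real i" "real (t - i)"] assms by auto
  ultimately show False by (simp add: binomial_gbinomial)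
qed

lemma num_cliques_le_gchoose_bound:
  assumes H: "is_sgraph V s H" and "i < s" "s \<le> t" "real t \<le> x"
    and deg: "real (max_deg V H i) \<le> (x - real i) gchoose (s - i)"
  shows "real (num_cliques V s H t) \<le> real (card V choose i) * ((x - real i) gchoose (t - i)) / real (t choose i)"
proof (rule num_cliques_le_by_links[OF H _ \<open>s \<le> t\<close>])
  fix I assume I: "I \<subseteq> V" "card I = i"
  have V: "finite V" using H unfolding is_sgraph_def by simp
  have "real (card (link H I)) \<le> (x - real i) gchoose (s - i)"
    using card_link_le_max_deg[OF H I] deg by (meson of_nat_le_iff order.trans)
  then show "real (card (cliques V (s - i) (link H I) (t - i))) \<le> (x - real i) gchoose (t - i)"
    using card_cliques_le_gchoose[OF V finite_link[OF H I(1)]] assms by simp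
qed (use \<open>i < s\<close> in simp)

lemma gbinomial_diff_div_binomial:
  assumes "i \<le> t" "real t \<le> x"
  shows "((x - real i) gchoose (t - i)) / real (t choose i) = (x gchoose t) / (x gchoose i)"
proof -
  have "(x gchoose t) * (real t gchoose i) = (x gchoose i) * ((x - real i) gchoose (t - i))"
    by (rule gbinomial_trinomial_revision[OF assms(1)])
  moreover have "0 < x gchoose i" using gbinomial_pos_real[of i x] assms by simp
  moreover have "0 < real (t choose i)" using assms(1) by simp
  ultimately show ?thesis by (simp add: binomial_gbinomial field_simps)
qed

theorem mainTheorem4:
  fixes V :: "'a set" and H :: "'a set set" and n s i t :: nat
  assumes "is_sgraph V s H" and "card V = n"
    and "1 \<le> i" and "i < s" and "s \<le> t"
  shows
    "(\<forall>(\<Delta>::nat) ns. max_deg V H i \<le> \<Delta> \<and> strict_cascade (s - i) ns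
        \<and> \<Delta> = cascade_value (s - i) ns \<longrightarrow>
        real (num_cliques V s H t) \<le> real (n choose i) * (1 / real (t choose i)) *
          (\<Sum>k < length ns. real ((ns ! k) choose (t - i - k))))
     \<and> (\<forall>x::real. x \<ge> real s \<and> real (max_deg V H i) \<le> (x - real i) gchoose (s - i) \<longrightarrow>
        (x < real t \<longrightarrow> num_cliques V s H t = 0) \<and>
        (x \<ge> real t \<longrightarrow>
           real (num_cliques V s H t) \<le> real (n choose i) * ((x - real i) gchoose (t - i)) / real (t choose i)
         \<and> real (n choose i) * ((x - real i) gchoose (t - i)) / real (t choose i)
             = real (n choose i) * (x gchoose t) / (x gchoose i)))"
proof (intro conjI allI impI)
  fix \<Delta> :: nat and ns
  assume "max_deg V H i \<le> \<Delta> \<and> strict_cascade (s - i) ns \<and> \<Delta> = cascade_value (s - i) ns"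
  then have "real (num_cliques V s H t) \<le> real (n choose i) * real (cascade_sum (t - i) ns) / real (t choose i)"
    using num_cliques_le_cascade_bound[OF assms(1,4,5)] assms(2) by simp
  then show "real (num_cliques V s H t) \<le> real (n choose i) * (1 / real (t choose i)) *
      (\<Sum>k < length ns. real ((ns ! k) choose (t - i - k)))"
    by (simp add: cascade_sum_eq_sum)
next
  fix x :: real
  assume "real s \<le> x \<and> real (max_deg V H i) \<le> (x - real i) gchoose (s - i)"
  then have x: "real s \<le> x" "real (max_deg V H i) \<le> (x - real i) gchoose (s - i)" by simp_all
  show "num_cliques V s H t = 0" if "x < real t"
    using num_cliques_eq_0_if_gchoose_small[OF assms(1,4) x(1) that x(2)] .
  assume "real t \<le> x"
  show "real (num_cliques V s H t) \<le> real (n choose i) * ((x - real i) gchoose (t - i)) / real (t choose i)"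
    using num_cliques_le_gchoose_bound[OF assms(1,4,5) \<open>real t \<le> x\<close> x(2)] assms(2) by simp
  show "real (n choose i) * ((x - real i) gchoose (t - i)) / real (t choose i)
      = real (n choose i) * (x gchoose t) / (x gchoose i)"
    using gbinomial_diff_div_binomial[of i t x] assms(4,5) \<open>real t \<le> x\<close> by (simp add: field_simps)
qed

end
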